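(* Let $z,w,u>0$ be parameters for which $\mathcal H(z,w,u)$ and the generating functions below are finite, and suppose that $\Gamma\mathcal{DAG}$ is a procedure such that, for every $t\in[0,u]$, $\Gamma\mathcal{DAG}(\frac{z}{1+w},w,t)$ returns each labelled DAG $G$ with probability $\frac{(z/(1+w))^{v(G)}w^{e(G)}t^{s(G)}}{(1+w)^{\binom{v(G)}2}v(G)!\,\mathrm{DAG}(\frac{z}{1+w},w,t)}$. Then the procedure $\Gamma\mathcal H(z,w,u)$ described below returns each $\mathcal H$-structure $H$ with $n$ vertices, $m$ edges and $k$ sources with probability \[\mathbb P[\Gamma\mathcal H(z,w,u)=H]=\frac{z^{n}w^{m}u^{k}}{n!\,(1+w)^{\binom n2}\,\mathcal H(z,w,u)}.\]
   Context: $\mathrm{Set}(z,w)=\sum_{n\ge0}\frac{z^n}{(1+w)^{\binom n2}n!}$. A labelled DAG with $n$ vertices is a directed acyclic graph on vertex set $\{1,\dots,n\}$; $v(G),e(G),s(G)$ denote its numbers of vertices, edges and sources (vertices of in-degree $0$). $\mathrm{DAG}(z,w,u)=\sum_G \frac{z^{v(G)}w^{e(G)}u^{s(G)}}{(1+w)^{\binom{v(G)}{2}}v(G)!}=\frac{\mathrm{Set}((u-1)z,w)}{\mathrm{Set}(-z,w)}$. An $\mathcal H$-structure is a labelled DAG with at least one vertex whose source with the smallest label is an isolated vertex (no incoming or outgoing edges); this vertex is called its distinguished source. $\mathcal H(z,w,u)=\sum_H \frac{z^{v(H)}w^{e(H)}u^{s(H)}}{(1+w)^{\binom{v(H)}2}v(H)!}$,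 the sum over all $\mathcal H$-structures. Procedure $\Gamma\mathcal H(z,w,u)$: draw $x$ uniform in $[0,1)$; compute the unique $t\in[0,u]$ with $\frac{\mathrm{Set}((t-1)z,w)-\mathrm{Set}(-z,w)}{\mathrm{Set}((u-1)z,w)-\mathrm{Set}(-z,w)}=x$; let $G_1=\Gamma\mathcal{DAG}(\frac z{1+w},w,t)$; form $H$ by adding a new isolated vertex $v$ to $G_1$, with $n=v(G_1)+1$; give $v$ a uniformly random label in $\{1,\dots,n\}$ and relabel $G_1$ order-preservingly with the remaining labels; finally, if the sources of $H$ carry labels $\ell_1<\dots<\ell_k$ and $v$ carries $\ell_r$, cyclically permute the labels of the sources (source with label $\ell_i$ receives label $\ell_{i-r+1 \bmod k}$) so that $v$ has the smallest source label; return $H$. *)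

theory Defs
  imports "HOL-Probability.Probability"
begin

text \<open>A labelled digraph on vertex set {1..n} is a pair (n, E) with E a set of arcs.\<close>
type_synonym ldg = "nat \<times> (nat \<times> nat) set"

definition is_dag :: "ldg \<Rightarrow> bool" where
  "is_dag G \<longleftrightarrow> snd G \<subseteq> {1..fst G} \<times> {1..fst G} \<and> acyclic (snd G)"

definition nverts :: "ldg \<Rightarrow> nat" where "nverts G = fst G"
definition nedges :: "ldg \<Rightarrow> nat" where "nedges G = card (snd G)"
definition sources :: "ldg \<Rightarrow> nat set" where
  "sources G = {v \<in> {1..fst G}. \<forall>a. (a, v) \<notin> snd G}"
definition nsources :: "ldg \<Rightarrow> nat" where "nsources G = card (sources G)"

definition is_H :: "ldg \<Rightarrow> bool" where
  "is_H G \<longleftrightarrow> is_dag G \<and> fst G \<ge> 1 \<and>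
     (\<forall>a. (a, Min (sources G)) \<notin> snd G \<and> (Min (sources G), a) \<notin> snd G)"

definition weight :: "real \<Rightarrow> real \<Rightarrow> real \<Rightarrow> ldg \<Rightarrow> real" where
  "weight z w u G = z ^ nverts G * w ^ nedges G * u ^ nsources G /
      ((1 + w) ^ (nverts G choose 2) * fact (nverts G))"

definition dags_of_size :: "nat \<Rightarrow> ldg set" where
  "dags_of_size n = {G. is_dag G \<and> fst G = n}"
definition Hs_of_size :: "nat \<Rightarrow> ldg set" where
  "Hs_of_size n = {G. is_H G \<and> fst G = n}"

definition DAG_terms :: "real \<Rightarrow> real \<Rightarrow> real \<Rightarrow> nat \<Rightarrow> real" where
  "DAG_terms z w u n = (\<Sum>G\<in>dags_of_size n. weight z w u G)"
definition H_terms :: "real \<Rightarrow> real \<Rightarrow> real \<Rightarrow> nat \<Rightarrow> real" where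
  "H_terms z w u n = (\<Sum>G\<in>Hs_of_size n. weight z w u G)"

definition DAGgf :: "real \<Rightarrow> real \<Rightarrow> real \<Rightarrow> real" where
  "DAGgf z w u = (\<Sum>n. DAG_terms z w u n)"
definition Hgf :: "real \<Rightarrow> real \<Rightarrow> real \<Rightarrow> real" where
  "Hgf z w u = (\<Sum>n. H_terms z w u n)"

definition SetF :: "real \<Rightarrow> real \<Rightarrow> real" where
  "SetF z w = (\<Sum>n. z ^ n / ((1 + w) ^ (n choose 2) * fact n))"

definition tval :: "real \<Rightarrow> real \<Rightarrow> real \<Rightarrow> real \<Rightarrow> real" where
  "tval z w u x = (THE t. t \<in> {0..u} \<and>
     (SetF ((t - 1) * z) w - SetF (- z) w) / (SetF ((u - 1) * z) w - SetF (- z) w) = x)"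

definition shift_lbl :: "nat \<Rightarrow> nat \<Rightarrow> nat" where
  "shift_lbl j i = (if i < j then i else i + 1)"
definition insert_vertex :: "ldg \<Rightarrow> nat \<Rightarrow> ldg" where
  "insert_vertex G1 j = (fst G1 + 1, map_prod (shift_lbl j) (shift_lbl j) ` snd G1)"

definition list_idx :: "nat list \<Rightarrow> nat \<Rightarrow> nat" where
  "list_idx ls x = (THE i. i < length ls \<and> ls ! i = x)"

text \<open>Cyclic permutation of source labels: with sources l_1<...<l_k (0-based list ls) and
  v = ls!r0, the source with label ls!i receives label ls!((i - r0) mod k).\<close>
definition cyc_perm :: "nat list \<Rightarrow> nat \<Rightarrow> nat \<Rightarrow> nat" where
  "cyc_perm ls r0 x = (if x \<in> set ls
      then ls ! ((list_idx ls x + length ls - r0) mod length ls) else x)"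

definition finalize :: "ldg \<Rightarrow> nat \<Rightarrow> ldg" where
  "finalize G1 j = (let H0 = insert_vertex G1 j;
                        ls = sorted_list_of_set (sources H0);
                        r0 = list_idx ls j;
                        \<sigma> = cyc_perm ls r0
                    in (fst H0, map_prod \<sigma> \<sigma> ` snd H0))"

text \<open>Output distribution of the procedure, conditionally on the value t
  (D t is the distribution of Gamma-DAG(z/(1+w), w, t)).\<close>
definition GammaH_given_t :: "(real \<Rightarrow> ldg pmf) \<Rightarrow> real \<Rightarrow> ldg pmf" where
  "GammaH_given_t D t = bind_pmf (D t)
     (\<lambda>G1. map_pmf (finalize G1) (pmf_of_set {1..fst G1 + 1}))"

text \<open>P[Gamma-H(z,w,u) = H], with x uniform on [0,1) (law of total probability).\<close>
definition GammaH_prob :: "(real \<Rightarrow> ldg pmf) \<Rightarrow> real \<Rightarrow> real \<Rightarrow> real \<Rightarrow> ldg \<Rightarrow> real" where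
  "GammaH_prob D z w u H =
     (LINT x:{0..<1}|lborel. pmf (GammaH_given_t D (tval z w u x)) H)"

end

(* For a fixed parameter t the procedure adds an isolated vertex to a DAG G and rotates the source
   labels cyclically.  The map (G, j) |-> H is a bijection onto the pairs (H, j) of an H-structure H
   and a source j of H; it adds one vertex and one source, and n * weight z w t H equals
   z * t * weight (z/(1+w)) w t G.  Hence, for H with n vertices and k sources,
     P[Gamma H = H | t] = k * weight z w 1 H * t^(k-1) / (z * DAG(z/(1+w), w, t)).
   Inclusion-exclusion over sets of sources gives DAG(x, w, t) = Set((t-1) x) * DAG(x, w, 1), while
   t has density z * Set((t-1) z/(1+w)) / F on [0, u], with F = Set((u-1) z) - Set(-z).  The Set
   factors cancel, and integrating t^(k-1) over [0, u] yields weight z w u H / (F * DAG(z/(1+w), w, 1)).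
   The same bijection and inclusion-exclusion identify F * DAG(z/(1+w), w, 1) with H(z, w, u). *)

theory Submission
  imports Defs "HOL-Computational_Algebra.Formal_Power_Series"
begin

section \<open>Relabelling labelled digraphs\<close>

lemma trancl_map_prod_inj_on:
  assumes "inj_on f A" "E \<subseteq> A \<times> A"
  shows "(map_prod f f ` E)\<^sup>+ = map_prod f f ` E\<^sup>+"
proof
  show "(map_prod f f ` E)\<^sup>+ \<subseteq> map_prod f f ` E\<^sup>+"
  proof clarify
    fix a b assume "(a, b) \<in> (map_prod f f ` E)\<^sup>+"
    then show "(a, b) \<in> map_prod f f ` E\<^sup>+"
    proof (induction rule: trancl_induct)
      case (step b c)
      then obtain x y y' z where "(x, y) \<in> E\<^sup>+" "(y', z) \<in> E" "a = f x" "b = f y" "b = f y'" "c = f z"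
        by auto
      moreover have "y \<in> A" "y' \<in> A"
        using assms(2) trancl_subset_Sigma[OF assms(2)] calculation(1,2) by auto
      ultimately show ?case
        using assms(1) by (metis inj_onD map_prod_imageI trancl_into_trancl)
    qed auto
  qed
  show "map_prod f f ` E\<^sup>+ \<subseteq> (map_prod f f ` E)\<^sup>+"
  proof clarify
    fix x y assume "(x, y) \<in> E\<^sup>+"
    then show "(f x, f y) \<in> (map_prod f f ` E)\<^sup>+"
      by (induction rule: trancl_induct) (auto intro: trancl_into_trancl)
  qed
qed

lemma acyclic_map_prod_iff:
  assumes "inj_on f A" "E \<subseteq> A \<times> A"
  shows "acyclic (map_prod f f ` E) \<longleftrightarrow> acyclic E"
  using trancl_subset_Sigma[OF assms(2)] inj_onD[OF assms(1)]
  by (fastforce simp: acyclic_def trancl_map_prod_inj_on[OF assms])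

definition map_ldg :: "nat \<Rightarrow> (nat \<Rightarrow> nat) \<Rightarrow> ldg \<Rightarrow> ldg" where
  "map_ldg n f G = (n, map_prod f f ` snd G)"

definition isolated :: "ldg \<Rightarrow> nat \<Rightarrow> bool" where
  "isolated G v \<longleftrightarrow> (\<forall>a. (a, v) \<notin> snd G \<and> (v, a) \<notin> snd G)"

lemma is_H_iff: "is_H G \<longleftrightarrow> is_dag G \<and> 1 \<le> fst G \<and> isolated G (Min (sources G))"
  by (simp add: is_H_def isolated_def)

lemma fst_map_ldg [simp]: "fst (map_ldg n f G) = n"
  by (simp add: map_ldg_def)

lemma map_ldg_map_ldg: "map_ldg n g (map_ldg m f G) = map_ldg n (g \<circ> f) G"
  by (simp add: map_ldg_def image_comp map_prod.comp)

lemma map_ldg_cong_id: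
  assumes "fst G = n" "\<And>a b. (a, b) \<in> snd G \<Longrightarrow> f a = a \<and> f b = b"
  shows "map_ldg n f G = G"
proof -
  have "map_prod f f ` snd G = snd G"
    using assms(2) by (force simp: image_iff)
  then show ?thesis using assms(1) by (simp add: map_ldg_def prod_eq_iff)
qed

lemma map_ldg_id: "fst G = n \<Longrightarrow> map_ldg n id G = G"
  by (rule map_ldg_cong_id) auto

lemma nedges_map_ldg: "inj f \<Longrightarrow> nedges (map_ldg n f G) = nedges G"
  by (simp add: nedges_def map_ldg_def card_image inj_on_subset[OF prod.inj_map])

lemma isolated_map_ldg: "inj f \<Longrightarrow> isolated (map_ldg n f G) (f v) \<longleftrightarrow> isolated G v"
  by (auto simp: isolated_def map_ldg_def dest: injD)

context
  fixes n n' :: nat and f :: "nat \<Rightarrow> nat"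
  assumes inj: "inj f" and range: "\<And>y. f y \<in> {1..n'} \<longleftrightarrow> y \<in> {1..n}"
begin

lemma is_dag_map_ldg:
  assumes "fst G = n"
  shows "is_dag (map_ldg n' f G) \<longleftrightarrow> is_dag G"
proof -
  have "map_prod f f ` snd G \<subseteq> {1..n'} \<times> {1..n'} \<longleftrightarrow> snd G \<subseteq> {1..n} \<times> {1..n}"
    using range by (auto simp del: atLeastAtMost_iff)
  then show ?thesis
    using assms by (simp add: is_dag_def map_ldg_def acyclic_map_prod_iff[OF inj, of "snd G"])
qed

lemma sources_map_ldg:
  assumes "fst G = n"
  shows "sources (map_ldg n' f G) = f ` sources G \<union> ({1..n'} - range f)"
proof -
  have "(\<forall>a. (a, f y) \<notin> map_prod f f ` snd G) \<longleftrightarrow> (\<forall>a. (a, y) \<notin> snd G)" for y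
    by (auto dest: injD[OF inj])
  moreover have "(a, v) \<notin> map_prod f f ` snd G" if "v \<notin> range f" for a v
    using that by auto
  ultimately show ?thesis
    using assms range unfolding sources_def map_ldg_def
    by (auto simp: inj_eq[OF inj] simp del: atLeastAtMost_iff)
qed

end

lemma permutes_in_superset_iff: "\<sigma> permutes S \<Longrightarrow> S \<subseteq> A \<Longrightarrow> \<sigma> y \<in> A \<longleftrightarrow> y \<in> A"
  by (metis permutes_in_image permutes_not_in subsetD)

lemma
  assumes "\<sigma> permutes S" "S \<subseteq> {1..fst G}"
  shows is_dag_map_ldg_perm: "is_dag (map_ldg (fst G) \<sigma> G) \<longleftrightarrow> is_dag G"
    and sources_map_ldg_perm: "sources (map_ldg (fst G) \<sigma> G) = \<sigma> ` sources G"
proof -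
  have inj: "inj \<sigma>" and surj: "range \<sigma> = UNIV"
    using assms(1) by (auto simp: permutes_inj permutes_surj)
  have range: "\<sigma> y \<in> {1..fst G} \<longleftrightarrow> y \<in> {1..fst G}" for y
    using assms by (rule permutes_in_superset_iff)
  show "is_dag (map_ldg (fst G) \<sigma> G) \<longleftrightarrow> is_dag G"
    using is_dag_map_ldg[OF inj range] by simp
  show "sources (map_ldg (fst G) \<sigma> G) = \<sigma> ` sources G"
    using sources_map_ldg[OF inj range] surj by simp
qed

lemma finite_sources [simp]: "finite (sources G)"
  by (rule finite_subset[of _ "{1..fst G}"]) (auto simp: sources_def)

lemma sources_subset: "sources G \<subseteq> {1..fst G}"
  by (auto simp: sources_def)

lemma dag_has_source:
  assumes "is_dag G" "0 < fst G"
  shows "sources G \<noteq> {}"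
proof -
  have E: "snd G \<subseteq> {1..fst G} \<times> {1..fst G}" "acyclic (snd G)"
    using assms by (auto simp: is_dag_def)
  have "finite (snd G)"
    using E(1) by (rule finite_subset) simp
  then have wf: "wf (snd G)"
    using E(2) by (rule finite_acyclic_wf)
  have one: "1 \<in> {1..fst G}"
    using assms(2) by simp
  obtain v where v: "v \<in> {1..fst G}" "\<And>y. (y, v) \<in> snd G \<Longrightarrow> y \<notin> {1..fst G}"
    by (rule wfE_min[OF wf one]) blast
  moreover have "(a, v) \<notin> snd G" for a
    using v(2) E(1) by (meson SigmaD1 subsetD)
  ultimately have "v \<in> sources G"
    by (simp add: sources_def)
  then show ?thesis by auto
qed

section \<open>Inserting an isolated vertex and rotating the sources\<close>

definition unshift_lbl :: "nat \<Rightarrow> nat \<Rightarrow> nat" where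
  "unshift_lbl j i = (if i < j then i else i - 1)"

definition remove_vertex :: "ldg \<Rightarrow> nat \<Rightarrow> ldg" where
  "remove_vertex H j = map_ldg (fst H - 1) (unshift_lbl j) H"

lemma insert_vertex_eq_map_ldg: "insert_vertex G j = map_ldg (fst G + 1) (shift_lbl j) G"
  by (simp add: insert_vertex_def map_ldg_def)

lemma unshift_shift_lbl [simp]: "unshift_lbl j (shift_lbl j i) = i"
  by (simp add: unshift_lbl_def shift_lbl_def)

lemma shift_unshift_lbl: "i \<noteq> j \<Longrightarrow> shift_lbl j (unshift_lbl j i) = i"
  by (auto simp: unshift_lbl_def shift_lbl_def)

lemma shift_lbl_neq [simp]: "shift_lbl j i \<noteq> j" "j \<noteq> shift_lbl j i"
  by (auto simp: shift_lbl_def)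

lemma inj_shift_lbl: "inj (shift_lbl j)"
  by (metis injI unshift_shift_lbl)

lemma range_shift_lbl: "range (shift_lbl j) = - {j}"
proof -
  have "i \<in> range (shift_lbl j)" if "i \<noteq> j" for i
    using shift_unshift_lbl[OF that] by (metis rangeI)
  then show ?thesis by auto
qed

context
  fixes G :: ldg and j :: nat
  assumes j: "j \<in> {1..fst G + 1}"
begin

lemma shift_lbl_in_range_iff: "shift_lbl j y \<in> {1..fst G + 1} \<longleftrightarrow> y \<in> {1..fst G}"
  using j by (auto simp: shift_lbl_def)

lemma is_dag_insert_vertex: "is_dag (insert_vertex G j) \<longleftrightarrow> is_dag G"
  unfolding insert_vertex_eq_map_ldg by (rule is_dag_map_ldg[OF inj_shift_lbl shift_lbl_in_range_iff refl])

lemma sources_insert_vertex: "sources (insert_vertex G j) = insert j (shift_lbl j ` sources G)"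
  unfolding insert_vertex_eq_map_ldg sources_map_ldg[OF inj_shift_lbl shift_lbl_in_range_iff refl]
  using j by (auto simp: range_shift_lbl)

end

lemma fst_insert_vertex [simp]: "fst (insert_vertex G j) = fst G + 1"
  by (simp add: insert_vertex_def)

lemma isolated_insert_vertex: "isolated (insert_vertex G j) j"
  by (auto simp: isolated_def insert_vertex_def)

lemma remove_insert_vertex: "remove_vertex (insert_vertex G j) j = G"
  unfolding remove_vertex_def insert_vertex_eq_map_ldg map_ldg_map_ldg
  by (rule map_ldg_cong_id) (auto simp: map_ldg_def)

lemma insert_remove_vertex:
  assumes "isolated H j" "1 \<le> fst H"
  shows "insert_vertex (remove_vertex H j) j = H"
  unfolding remove_vertex_def insert_vertex_eq_map_ldg map_ldg_map_ldg
  using assms by (intro map_ldg_cong_id) (auto simp: map_ldg_def isolated_def intro!: shift_unshift_lbl)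

lemma list_idx_nth: "distinct ls \<Longrightarrow> i < length ls \<Longrightarrow> list_idx ls (ls ! i) = i"
  unfolding list_idx_def by (rule the_equality) (auto simp: nth_eq_iff_index_eq)

lemma
  assumes "distinct ls" "r < length ls"
  shows cyc_perm_permutes: "cyc_perm ls r permutes set ls"
    and cyc_perm_to_front: "cyc_perm ls r (ls ! r) = ls ! 0"
proof -
  let ?k = "length ls" and ?\<sigma> = "cyc_perm ls r"
  have k: "0 < ?k" using assms(2) by linarith
  have idx: "list_idx ls x < ?k \<and> ls ! list_idx ls x = x" if "x \<in> set ls" for x
    using that assms(1) by (metis in_set_conv_nth list_idx_nth)
  have \<sigma>: "?\<sigma> x = ls ! ((list_idx ls x + ?k - r) mod ?k)" if "x \<in> set ls" for x
    using that by (simp add: cyc_perm_def)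
  have "inj_on ?\<sigma> (set ls)"
  proof (rule inj_onI)
    fix x y assume x: "x \<in> set ls" and y: "y \<in> set ls" and "?\<sigma> x = ?\<sigma> y"
    then have "(list_idx ls x + ?k - r) mod ?k = (list_idx ls y + ?k - r) mod ?k"
      using nth_eq_iff_index_eq[OF assms(1) mod_less_divisor[OF k] mod_less_divisor[OF k]]
      by (simp add: \<sigma> x y)
    moreover have "((i + ?k - r) mod ?k + r) mod ?k = i" if "i < ?k" for i
      using that assms(2) by (simp add: mod_add_left_eq)
    ultimately have "list_idx ls x = list_idx ls y"
      using idx[OF x] idx[OF y] by metis
    then show "x = y" using idx[OF x] idx[OF y] by metis
  qed
  moreover have "?\<sigma> ` set ls \<subseteq> set ls"
    using k by (auto simp: \<sigma> intro!: nth_mem)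
  ultimately have "bij_betw ?\<sigma> (set ls) (set ls)"
    by (simp add: bij_betw_def endo_inj_surj)
  then show "?\<sigma> permutes set ls"
    by (rule bij_imp_permutes) (simp add: cyc_perm_def)
  show "?\<sigma> (ls ! r) = ls ! 0"
    using assms by (simp add: cyc_perm_def list_idx_nth)
qed

definition source_rotation :: "ldg \<Rightarrow> nat \<Rightarrow> nat \<Rightarrow> nat" where
  "source_rotation H j =
     (let ls = sorted_list_of_set (sources H) in cyc_perm ls (list_idx ls j))"

lemma
  assumes "j \<in> sources H"
  shows source_rotation_permutes: "source_rotation H j permutes sources H"
    and source_rotation_to_Min: "source_rotation H j j = Min (sources H)"
proof -
  define ls where "ls = sorted_list_of_set (sources H)"
  have ls: "distinct ls" "set ls = sources H" by (auto simp: ls_def)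
  then obtain r where r: "r < length ls" "ls ! r = j"
    using assms by (metis in_set_conv_nth)
  have rot: "source_rotation H j = cyc_perm ls r"
    using list_idx_nth[OF ls(1) r(1)] r by (simp add: source_rotation_def ls_def Let_def)
  show "source_rotation H j permutes sources H"
    using cyc_perm_permutes[OF ls(1) r(1)] by (simp add: rot ls(2))
  have "ls ! 0 = Min (sources H)"
    unfolding ls_def using assms by (subst sorted_list_of_set_nonempty) auto
  then show "source_rotation H j j = Min (sources H)"
    using cyc_perm_to_front[OF ls(1) r(1)] by (simp add: rot r(2))
qed

lemma source_rotation_cong: "sources H = sources H' \<Longrightarrow> source_rotation H j = source_rotation H' j"
  by (simp add: source_rotation_def)

lemma finalize_eq_map_ldg:
  "finalize G j = map_ldg (fst G + 1) (source_rotation (insert_vertex G j) j) (insert_vertex G j)"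
  by (simp add: finalize_def source_rotation_def map_ldg_def Let_def insert_vertex_def)

definition unfinalize :: "ldg \<Rightarrow> nat \<Rightarrow> ldg" where
  "unfinalize H j = remove_vertex (map_ldg (fst H) (inv (source_rotation H j)) H) j"

lemma
  assumes j: "j \<in> {1..fst G + 1}"
  shows sources_finalize: "sources (finalize G j) = insert j (shift_lbl j ` sources G)"
    and is_dag_finalize: "is_dag (finalize G j) \<longleftrightarrow> is_dag G"
    and nedges_finalize: "nedges (finalize G j) = nedges G"
    and isolated_finalize: "isolated (finalize G j) (Min (sources (finalize G j)))"
    and unfinalize_finalize: "unfinalize (finalize G j) j = G"
proof -
  define H0 where "H0 = insert_vertex G j"
  define \<sigma> where "\<sigma> = source_rotation H0 j"
  have src: "sources H0 = insert j (shift_lbl j ` sources G)"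
    unfolding H0_def using j by (rule sources_insert_vertex)
  have \<sigma>: "\<sigma> permutes sources H0" "\<sigma> j = Min (sources H0)"
    using source_rotation_permutes[of j H0] source_rotation_to_Min[of j H0] src
    by (auto simp: \<sigma>_def)
  have fin: "finalize G j = map_ldg (fst H0) \<sigma> H0"
    by (simp add: finalize_eq_map_ldg \<sigma>_def H0_def)
  have src_fin: "sources (finalize G j) = sources H0"
    using sources_map_ldg_perm[OF \<sigma>(1) sources_subset] permutes_image[OF \<sigma>(1)] by (simp add: fin)
  then show "sources (finalize G j) = insert j (shift_lbl j ` sources G)"
    by (simp add: src)
  show "is_dag (finalize G j) \<longleftrightarrow> is_dag G"
    using is_dag_map_ldg_perm[OF \<sigma>(1) sources_subset] is_dag_insert_vertex[OF j]
    by (simp add: fin H0_def)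
  show "nedges (finalize G j) = nedges G"
    using permutes_inj[OF \<sigma>(1)]
    by (simp add: fin H0_def insert_vertex_eq_map_ldg nedges_map_ldg inj_shift_lbl)
  have "isolated (finalize G j) (\<sigma> j)"
    using isolated_insert_vertex[of G j] isolated_map_ldg[OF permutes_inj[OF \<sigma>(1)]]
    by (simp add: fin flip: H0_def)
  then show "isolated (finalize G j) (Min (sources (finalize G j)))"
    by (simp add: src_fin \<sigma>(2))
  have "source_rotation (finalize G j) j = \<sigma>"
    by (simp add: \<sigma>_def source_rotation_cong[OF src_fin])
  then show "unfinalize (finalize G j) j = G"
    using permutes_inv_o(2)[OF \<sigma>(1)]
    by (simp add: unfinalize_def fin map_ldg_map_ldg map_ldg_id H0_def remove_insert_vertex)
qed

lemma fst_finalize [simp]: "fst (finalize G j) = fst G + 1"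
  by (simp add: finalize_def Let_def)

lemma nsources_finalize: "j \<in> {1..fst G + 1} \<Longrightarrow> nsources (finalize G j) = Suc (nsources G)"
  by (simp add: nsources_def sources_finalize card_image inj_on_subset[OF inj_shift_lbl] image_iff)

lemma is_H_finalize: "j \<in> {1..fst G + 1} \<Longrightarrow> is_dag G \<Longrightarrow> is_H (finalize G j)"
  by (simp add: is_H_iff is_dag_finalize isolated_finalize)

lemma
  assumes H: "is_H H" and j: "j \<in> sources H"
  shows unfinalize_in_range: "j \<in> {1..fst (unfinalize H j) + 1}"
    and finalize_unfinalize: "finalize (unfinalize H j) j = H"
proof -
  define \<sigma> where "\<sigma> = source_rotation H j"
  define H0 where "H0 = map_ldg (fst H) (inv \<sigma>) H"
  have \<sigma>: "\<sigma> permutes sources H" "\<sigma> j = Min (sources H)"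
    using source_rotation_permutes[OF j] source_rotation_to_Min[OF j] by (simp_all add: \<sigma>_def)
  have inv\<sigma>: "inv \<sigma> permutes sources H"
    using \<sigma>(1) by (rule permutes_inv)
  have n: "1 \<le> fst H" and iso: "isolated H (\<sigma> j)"
    using H \<sigma>(2) by (simp_all add: is_H_iff)
  have src0: "sources H0 = sources H"
    using sources_map_ldg_perm[OF inv\<sigma> sources_subset] permutes_image[OF inv\<sigma>] by (simp add: H0_def)
  have "isolated H0 (inv \<sigma> (\<sigma> j))"
    using iso isolated_map_ldg[OF permutes_inj[OF inv\<sigma>]] by (simp add: H0_def)
  then have iso0: "isolated H0 j"
    using permutes_inverses(2)[OF \<sigma>(1)] by simp
  have fst0: "fst H0 = fst H" by (simp add: H0_def map_ldg_def)
  have unfin: "unfinalize H j = remove_vertex H0 j"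
    by (simp add: unfinalize_def H0_def \<sigma>_def)
  show "j \<in> {1..fst (unfinalize H j) + 1}"
    using j sources_subset[of H] n by (auto simp: unfin remove_vertex_def map_ldg_def fst0)
  have "finalize (unfinalize H j) j = map_ldg (fst H) \<sigma> H0"
    using insert_remove_vertex[OF iso0] n
    by (simp add: unfin finalize_eq_map_ldg fst0 remove_vertex_def map_ldg_def
        source_rotation_cong[OF src0] \<sigma>_def)
  also have "\<dots> = H"
    using permutes_inv_o(1)[OF \<sigma>(1)] by (simp add: H0_def map_ldg_map_ldg map_ldg_id)
  finally show "finalize (unfinalize H j) j = H" .
qed

lemma finalize_eq_iff:
  assumes "is_H H" "j \<in> {1..fst G + 1}"
  shows "finalize G j = H \<longleftrightarrow> j \<in> sources H \<and> G = unfinalize H j"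
proof
  assume "finalize G j = H"
  then show "j \<in> sources H \<and> G = unfinalize H j"
    using sources_finalize[OF assms(2)] unfinalize_finalize[OF assms(2)] by auto
next
  assume "j \<in> sources H \<and> G = unfinalize H j"
  then show "finalize G j = H"
    using finalize_unfinalize[OF assms(1)] by auto
qed

lemma
  assumes "is_H H" "j \<in> sources H"
  shows is_dag_unfinalize: "is_dag (unfinalize H j)"
    and fst_unfinalize: "fst (unfinalize H j) + 1 = fst H"
    and nsources_unfinalize: "Suc (nsources (unfinalize H j)) = nsources H"
  using is_dag_finalize[OF unfinalize_in_range[OF assms]] nsources_finalize[OF unfinalize_in_range[OF assms]]
    assms fst_finalize[of "unfinalize H j" j]
  by (simp_all add: finalize_unfinalize is_H_def del: fst_finalize)

section \<open>The output distribution for a fixed parameter\<close>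

definition gf_denom :: "real \<Rightarrow> nat \<Rightarrow> real" where
  "gf_denom w n = (1 + w) ^ (n choose 2) * fact n"

lemma gf_denom_pos: "0 \<le> w \<Longrightarrow> 0 < gf_denom w n"
  by (simp add: gf_denom_def)

lemma gf_denom_Suc: "gf_denom w (Suc n) = real (Suc n) * (1 + w) ^ n * gf_denom w n"
proof -
  have "Suc n choose 2 = n + (n choose 2)"
    using binomial_Suc_Suc[of n 1] by (simp add: numeral_2_eq_2)
  then show ?thesis by (simp add: gf_denom_def power_add algebra_simps del: of_nat_Suc)
qed

lemma weight_eq: "weight z w t G = z ^ nverts G * w ^ nedges G * t ^ nsources G / gf_denom w (nverts G)"
  by (simp add: weight_def gf_denom_def)

lemma weight_eq_weight_1: "weight x w t G = weight x w 1 G * t ^ nsources G"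
  by (simp add: weight_def)

lemma weight_finalize:
  assumes "0 \<le> w" "j \<in> {1..fst G + 1}"
  shows "real (fst G + 1) * weight z w t (finalize G j) = z * t * weight (z / (1 + w)) w t G"
proof -
  have "0 < (1 + w) ^ fst G" "0 < gf_denom w (fst G)"
    using assms(1) gf_denom_pos by auto
  then show ?thesis
    using assms(2)
    by (simp add: weight_eq nverts_def nedges_finalize nsources_finalize gf_denom_Suc
        power_divide field_simps del: of_nat_Suc)
qed

lemma pmf_GammaH_given_t_eq_sum:
  assumes H: "is_H H"
  shows "pmf (GammaH_given_t D t) H = (\<Sum>j\<in>sources H. pmf (D t) (unfinalize H j)) / real (nverts H)"
proof -
  have choices: "pmf (map_pmf (finalize G) (pmf_of_set {1..fst G + 1})) H =
      (\<Sum>j\<in>sources H. indicator {unfinalize H j} G) / real (nverts H)" for G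
  proof -
    have "j \<in> {1..fst G + 1} \<inter> finalize G -` {H} \<longleftrightarrow> j \<in> sources H \<and> G = unfinalize H j" for j
    proof
      assume "j \<in> {1..fst G + 1} \<inter> finalize G -` {H}"
      then show "j \<in> sources H \<and> G = unfinalize H j"
        using finalize_eq_iff[OF H, of j G] by simp
    next
      assume "j \<in> sources H \<and> G = unfinalize H j"
      then show "j \<in> {1..fst G + 1} \<inter> finalize G -` {H}"
        using unfinalize_in_range[OF H] finalize_unfinalize[OF H] by simp
    qed
    then have "{1..fst G + 1} \<inter> finalize G -` {H} = {j \<in> sources H. G = unfinalize H j}"
      by blast
    moreover have "Suc (fst G) = fst H" if "\<exists>j\<in>sources H. G = unfinalize H j"
      using fst_unfinalize[OF H] that by auto
    ultimately show ?thesis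
      by (cases "\<exists>j\<in>sources H. G = unfinalize H j")
        (auto simp: pmf_map measure_pmf_of_set indicator_def nverts_def Int_def)
  qed
  have "pmf (GammaH_given_t D t) H =
      (\<integral>G. (\<Sum>j\<in>sources H. indicator {unfinalize H j} G) / real (nverts H) \<partial>D t)"
    unfolding GammaH_given_t_def pmf_bind choices ..
  also have "\<dots> = (\<Sum>j\<in>sources H. pmf (D t) (unfinalize H j)) / real (nverts H)"
    by (simp add: integral_sum[where I = "sources H"] measure_pmf_single measure_pmf.emeasure_finite
        less_top[symmetric])
  finally show ?thesis .
qed

lemma pmf_GammaH_given_t:
  assumes H: "is_H H" and w: "0 \<le> w" and z: "z \<noteq> 0"
    and D: "\<And>G. is_dag G \<Longrightarrow> pmf (D t) G = weight (z / (1 + w)) w t G / Z"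
  shows "pmf (GammaH_given_t D t) H =
           real (nsources H) * weight z w 1 H * t ^ (nsources H - 1) / (z * Z)"
proof -
  have n: "real (nverts H) \<noteq> 0"
    using H by (simp add: is_H_def nverts_def)
  have "pmf (D t) (unfinalize H j) = real (nverts H) * weight z w 1 H * t ^ (nsources H - 1) / (z * Z)"
    if j: "j \<in> sources H" for j
  proof -
    let ?G = "unfinalize H j"
    have "real (nverts H) = real (fst ?G + 1)"
      using fst_unfinalize[OF H j] by (simp add: nverts_def)
    then have "real (nverts H) * weight z w 1 H = z * weight (z / (1 + w)) w 1 ?G"
      using weight_finalize[OF w unfinalize_in_range[OF H j], of z 1]
      by (simp only: finalize_unfinalize[OF H j] mult_1_right)
    moreover have "nsources ?G = nsources H - 1"
      using nsources_unfinalize[OF H j] by simp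
    then have "weight (z / (1 + w)) w t ?G = weight (z / (1 + w)) w 1 ?G * t ^ (nsources H - 1)"
      by (simp add: weight_eq)
    ultimately show ?thesis
      using D[OF is_dag_unfinalize[OF H j]] z by (simp add: field_simps)
  qed
  then show ?thesis
    using n by (simp add: pmf_GammaH_given_t_eq_sum[OF H] nsources_def)
qed

section \<open>Inclusion-exclusion over sources\<close>

definition dags_on :: "nat set \<Rightarrow> (nat \<times> nat) set set" where
  "dags_on V = {E. E \<subseteq> V \<times> V \<and> acyclic E}"

definition sources_on :: "nat set \<Rightarrow> (nat \<times> nat) set \<Rightarrow> nat set" where
  "sources_on V E = {v \<in> V. \<forall>a. (a, v) \<notin> E}"

definition dag_poly :: "real \<Rightarrow> real \<Rightarrow> nat set \<Rightarrow> real" where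
  "dag_poly w t V = (\<Sum>E\<in>dags_on V. w ^ card E * t ^ card (sources_on V E))"

lemma finite_dags_on: "finite V \<Longrightarrow> finite (dags_on V)"
  by (rule finite_subset[of _ "Pow (V \<times> V)"]) (auto simp: dags_on_def)

lemma dags_of_size_eq: "dags_of_size n = Pair n ` dags_on {1..n}"
  by (auto simp: dags_of_size_def dags_on_def is_dag_def image_iff)

lemma finite_dags_of_size: "finite (dags_of_size n)"
  by (simp add: dags_of_size_eq finite_dags_on)

lemma dags_of_size_0: "dags_of_size 0 = {(0, {})}"
  by (auto simp: dags_of_size_def is_dag_def acyclic_def)

lemma DAG_terms_eq_dag_poly: "DAG_terms x w t n = x ^ n * dag_poly w t {1..n} / gf_denom w n"
proof -
  have "DAG_terms x w t n = (\<Sum>E\<in>dags_on {1..n}. x ^ n * (w ^ card E * t ^ card (sources_on {1..n} E)) / gf_denom w n)"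
    unfolding DAG_terms_def dags_of_size_eq
    by (subst sum.reindex) (auto simp: inj_on_def weight_eq nverts_def nedges_def nsources_def
        sources_def sources_on_def mult.assoc)
  then show ?thesis
    by (simp add: dag_poly_def sum_distrib_left sum_divide_distrib)
qed

lemma sum_Pow_power:
  fixes x :: "'a :: comm_semiring_1"
  assumes "finite X"
  shows "(\<Sum>S\<in>Pow X. x ^ card S) = (1 + x) ^ card X"
  using prod_add[OF assms, of "\<lambda>_. x" "\<lambda>_. 1"] by (simp add: add.commute)

lemma sum_Pow_by_card:
  assumes "finite V"
  shows "(\<Sum>S\<in>Pow V. g (card S)) = (\<Sum>a\<le>card V. of_nat (card V choose a) * (g a :: real))"
proof -
  have "(\<Sum>S\<in>Pow V. g (card S)) = (\<Sum>a\<le>card V. \<Sum>S\<in>{S\<in>Pow V. card S = a}. g (card S))"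
    using assms by (intro sum.group[symmetric]) (auto intro: card_mono)
  also have "\<dots> = (\<Sum>a\<le>card V. of_nat (card V choose a) * g a)"
  proof (intro sum.cong refl)
    fix a
    have "{S\<in>Pow V. card S = a} = {S. S \<subseteq> V \<and> card S = a}" by auto
    then show "(\<Sum>S\<in>{S\<in>Pow V. card S = a}. g (card S)) = of_nat (card V choose a) * g a"
      using n_subsets[OF assms] by simp
  qed
  finally show ?thesis .
qed

lemma acyclic_Un_from_sources:
  assumes "E \<subseteq> T \<times> T" "B \<subseteq> S \<times> T" "S \<inter> T = {}" "acyclic E"
  shows "acyclic (E \<union> B)"
proof -
  have *: "y \<in> T \<and> ((x, y) \<in> E\<^sup>+ \<or> x \<in> S)" if "(x, y) \<in> (E \<union> B)\<^sup>+" for x y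
    using that
  proof (induction rule: trancl_induct)
    case (step y z) then show ?case using assms by (auto intro: trancl_into_trancl)
  qed (use assms in auto)
  show ?thesis
    using * assms(3,4) unfolding acyclic_def by blast
qed

lemma dag_poly_bij:
  assumes "bij_betw f V V'"
  shows "dag_poly w 1 V = dag_poly w 1 V'"
proof -
  let ?g = "inv_into V f"
  have f: "inj_on f V" "f ` V = V'" and g: "inj_on ?g V'" "?g ` V' = V"
    using assms bij_betw_inv_into[OF assms] by (auto simp: bij_betw_def)
  have gf: "?g (f x) = x" if "x \<in> V" for x
    using f that by simp
  have fg: "f (?g y) = y" if "y \<in> V'" for y
    using assms that by (simp add: bij_betw_inv_into_right)
  show ?thesis
    unfolding dag_poly_def power_one mult_1_right
  proof (rule sum.reindex_bij_witness[where j = "\<lambda>E. map_prod f f ` E" and i = "\<lambda>E. map_prod ?g ?g ` E"])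
    fix E assume "E \<in> dags_on V"
    then have E: "E \<subseteq> V \<times> V" "acyclic E" by (auto simp: dags_on_def)
    have "\<forall>p\<in>E. map_prod ?g ?g (map_prod f f p) = p"
      using E gf by auto
    then show "map_prod ?g ?g ` map_prod f f ` E = E"
      by (simp add: image_image)
    show "map_prod f f ` E \<in> dags_on V'"
      using E acyclic_map_prod_iff[OF f(1) E(1)] f(2) by (auto simp: dags_on_def)
    have "inj_on (map_prod f f) E"
      using map_prod_inj_on[OF f(1) f(1)] E(1) inj_on_subset by blast
    then show "w ^ card (map_prod f f ` E) = w ^ card E" by (simp add: card_image)
  next
    fix E assume "E \<in> dags_on V'"
    then have E: "E \<subseteq> V' \<times> V'" "acyclic E" by (auto simp: dags_on_def)
    have "\<forall>p\<in>E. map_prod f f (map_prod ?g ?g p) = p"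
      using E fg by auto
    then show "map_prod f f ` map_prod ?g ?g ` E = E"
      by (simp add: image_image)
    show "map_prod ?g ?g ` E \<in> dags_on V"
      using E acyclic_map_prod_iff[OF g(1) E(1)] g(2) by (auto simp: dags_on_def)
  qed
qed

lemma dag_poly_card: "finite V \<Longrightarrow> dag_poly w 1 V = dag_poly w 1 {1..card V}"
  by (metis card_atLeastAtMost diff_Suc_1 dag_poly_bij finite_atLeastAtMost finite_same_card_bij)

text \<open>Splitting a DAG whose sources include \<open>S\<close> into a DAG on \<open>V - S\<close> and an arbitrary set of
  arcs from \<open>S\<close> into \<open>V - S\<close>.\<close>
lemma sum_dags_with_sources:
  assumes V: "finite V" and S: "S \<subseteq> V"
  shows "(\<Sum>E\<in>{E\<in>dags_on V. S \<subseteq> sources_on V E}. w ^ card E) =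
         (1 + w) ^ (card S * card (V - S)) * dag_poly w 1 (V - S)"
proof -
  define T where "T = V - S"
  have ST: "S \<inter> T = {}" "V = S \<union> T" using S by (auto simp: T_def)
  have fin: "finite T" "finite S" using V S by (auto simp: T_def finite_subset)
  have "(\<Sum>E\<in>{E\<in>dags_on V. S \<subseteq> sources_on V E}. w ^ card E) =
        (\<Sum>p\<in>dags_on T \<times> Pow (S \<times> T). w ^ card (fst p) * w ^ card (snd p))"
  proof (rule sum.reindex_bij_witness[where j = "\<lambda>E. (E \<inter> T \<times> T, E \<inter> S \<times> T)" and i = "\<lambda>p. fst p \<union> snd p"])
    fix E assume "E \<in> {E\<in>dags_on V. S \<subseteq> sources_on V E}"
    then have E: "E \<subseteq> V \<times> V" "acyclic E" "S \<subseteq> sources_on V E" by (auto simp: dags_on_def)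
    show "fst (E \<inter> T \<times> T, E \<inter> S \<times> T) \<union> snd (E \<inter> T \<times> T, E \<inter> S \<times> T) = E"
      using E ST by (auto simp: sources_on_def)
    show "(E \<inter> T \<times> T, E \<inter> S \<times> T) \<in> dags_on T \<times> Pow (S \<times> T)"
      using E by (auto simp: dags_on_def intro: acyclic_subset)
    have "finite E" using E(1) V by (meson finite_SigmaI finite_subset)
    then have "card E = card (E \<inter> T \<times> T) + card (E \<inter> S \<times> T)"
      using E ST by (subst card_Un_disjoint[symmetric]) (auto intro!: arg_cong[where f=card] simp: sources_on_def)
    then show "w ^ card (fst (E \<inter> T \<times> T, E \<inter> S \<times> T)) * w ^ card (snd (E \<inter> T \<times> T, E \<inter> S \<times> T)) = w ^ card E"
      by (simp add: power_add)
  next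
    fix p assume "p \<in> dags_on T \<times> Pow (S \<times> T)"
    then have P: "fst p \<subseteq> T \<times> T" "acyclic (fst p)" "snd p \<subseteq> S \<times> T" by (auto simp: dags_on_def)
    show "((fst p \<union> snd p) \<inter> T \<times> T, (fst p \<union> snd p) \<inter> S \<times> T) = p"
      using P ST by (cases p) auto
    show "fst p \<union> snd p \<in> {E \<in> dags_on V. S \<subseteq> sources_on V E}"
      using P ST acyclic_Un_from_sources[OF P(1) P(3) ST(1) P(2)] by (auto simp: dags_on_def sources_on_def)
  qed
  also have "\<dots> = dag_poly w 1 T * (\<Sum>B\<in>Pow (S \<times> T). w ^ card B)"
    unfolding dag_poly_def sum_product by (simp add: sum.cartesian_product case_prod_beta)
  also have "(\<Sum>B\<in>Pow (S \<times> T). w ^ card B) = (1 + w) ^ (card S * card T)"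
    using fin by (simp add: sum_Pow_power card_cartesian_product)
  finally show ?thesis by (simp add: T_def mult.commute)
qed

text \<open>Inclusion-exclusion on the sources: \<open>t ^ s = \<Sum>S \<subseteq> sources. (t - 1) ^ card S\<close>.\<close>
theorem dag_poly_inclusion_exclusion:
  "dag_poly w t {1..n} =
     (\<Sum>a\<le>n. of_nat (n choose a) * (t - 1) ^ a * (1 + w) ^ (a * (n - a)) * dag_poly w 1 {1..n - a})"
proof -
  let ?V = "{1..n}"
  have "dag_poly w t ?V = (\<Sum>E\<in>dags_on ?V. w ^ card E * (\<Sum>S\<in>Pow (sources_on ?V E). (t - 1) ^ card S))"
    unfolding dag_poly_def
    by (intro sum.cong refl) (simp add: sum_Pow_power finite_subset[of _ ?V] sources_on_def)
  also have "\<dots> = (\<Sum>E\<in>dags_on ?V. \<Sum>S\<in>{S\<in>Pow ?V. S \<subseteq> sources_on ?V E}. w ^ card E * (t - 1) ^ card S)"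
    by (intro sum.cong refl) (auto simp: sum_distrib_left sources_on_def intro!: sum.cong)
  also have "\<dots> = (\<Sum>S\<in>Pow ?V. \<Sum>E\<in>{E\<in>dags_on ?V. S \<subseteq> sources_on ?V E}. w ^ card E * (t - 1) ^ card S)"
    by (rule sum.swap_restrict) (auto simp: finite_dags_on)
  also have "\<dots> = (\<Sum>S\<in>Pow ?V. (t - 1) ^ card S * ((1 + w) ^ (card S * (n - card S)) * dag_poly w 1 {1..n - card S}))"
  proof (intro sum.cong refl)
    fix S assume S: "S \<in> Pow ?V"
    then have card: "card (?V - S) = n - card S"
      by (subst card_Diff_subset) (auto simp: finite_subset)
    have "(\<Sum>E\<in>{E\<in>dags_on ?V. S \<subseteq> sources_on ?V E}. w ^ card E * (t - 1) ^ card S) =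
          (t - 1) ^ card S * (\<Sum>E\<in>{E\<in>dags_on ?V. S \<subseteq> sources_on ?V E}. w ^ card E)"
      by (simp add: sum_distrib_left mult.commute)
    then show "(\<Sum>E\<in>{E\<in>dags_on ?V. S \<subseteq> sources_on ?V E}. w ^ card E * (t - 1) ^ card S) =
          (t - 1) ^ card S * ((1 + w) ^ (card S * (n - card S)) * dag_poly w 1 {1..n - card S})"
      using S sum_dags_with_sources[of ?V S w] dag_poly_card[of "?V - S" w] card by simp
  qed
  also have "\<dots> = (\<Sum>a\<le>n. of_nat (n choose a) * ((t - 1) ^ a * ((1 + w) ^ (a * (n - a)) * dag_poly w 1 {1..n - a})))"
    using sum_Pow_by_card[of ?V "\<lambda>a. (t - 1) ^ a * ((1 + w) ^ (a * (n - a)) * dag_poly w 1 {1..n - a})"] by simp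
  finally show ?thesis by (simp add: mult.assoc)
qed

lemma choose_two_add: "(a + b) choose 2 = (a choose 2) + (b choose 2) + a * b"
proof (induction b)
  case (Suc b)
  have "Suc m choose 2 = m + (m choose 2)" for m
    using binomial_Suc_Suc[of m 1] by (simp add: numeral_2_eq_2)
  then show ?case using Suc by simp
qed simp

lemma binomial_div_gf_denom:
  assumes "a \<le> n" "0 \<le> w"
  shows "of_nat (n choose a) * (1 + w) ^ (a * (n - a)) / gf_denom w n =
           1 / (gf_denom w a * gf_denom w (n - a))"
proof -
  have "real (fact a * fact (n - a) * (n choose a)) = fact n"
    using binomial_fact_lemma[OF assms(1)] by (metis of_nat_fact)
  moreover have "(n choose 2) = (a choose 2) + ((n - a) choose 2) + a * (n - a)"
    using choose_two_add[of a "n - a"] assms(1) by simp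
  ultimately have eq: "gf_denom w a * gf_denom w (n - a) * (of_nat (n choose a) * (1 + w) ^ (a * (n - a))) =
      gf_denom w n"
    unfolding gf_denom_def by (simp add: power_add ac_simps)
  have pos: "0 < gf_denom w a" "0 < gf_denom w (n - a)" "0 < gf_denom w n"
    using assms(2) by (simp_all add: gf_denom_pos)
  have "X / qn = 1 / (qa * qb)"
    if "qa * qb * X = qn" "0 < qa" "0 < qb" "0 < qn" for qa qb qn X :: real
    using that by (auto simp: field_simps)
  from this[OF eq pos] show ?thesis .
qed

theorem DAG_terms_convolution:
  assumes "0 \<le> w"
  shows "DAG_terms x w t n = (\<Sum>a\<le>n. ((t - 1) * x) ^ a / gf_denom w a * DAG_terms x w 1 (n - a))"
proof -
  have "DAG_terms x w t n = (\<Sum>a\<le>n. x ^ n * (t - 1) ^ a * dag_poly w 1 {1..n - a} *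
      (of_nat (n choose a) * (1 + w) ^ (a * (n - a)) / gf_denom w n))"
    unfolding DAG_terms_eq_dag_poly
    by (subst dag_poly_inclusion_exclusion) (simp add: sum_distrib_left sum_divide_distrib mult_ac)
  also have "\<dots> = (\<Sum>a\<le>n. ((t - 1) * x) ^ a / gf_denom w a * DAG_terms x w 1 (n - a))"
  proof (intro sum.cong refl)
    fix a assume "a \<in> {..n}"
    then have "x ^ n = x ^ a * x ^ (n - a)"
      by (simp flip: power_add)
    then show "x ^ n * (t - 1) ^ a * dag_poly w 1 {1..n - a} *
        (of_nat (n choose a) * (1 + w) ^ (a * (n - a)) / gf_denom w n) =
        ((t - 1) * x) ^ a / gf_denom w a * DAG_terms x w 1 (n - a)"
      using \<open>a \<in> {..n}\<close> assms
      by (simp add: binomial_div_gf_denom DAG_terms_eq_dag_poly power_mult_distrib)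
  qed
  finally show ?thesis .
qed

section \<open>The DAG generating function\<close>

lemma SetF_eq: "SetF y w = (\<Sum>n. y ^ n / gf_denom w n)"
  by (simp add: SetF_def gf_denom_def)

lemma summable_norm_set_terms:
  assumes "0 \<le> w"
  shows "summable (\<lambda>n. norm (y ^ n / gf_denom w n))"
proof (rule summable_comparison_test[OF _ summable_exp[of "\<bar>y\<bar>"]])
  show "\<exists>N. \<forall>n\<ge>N. norm (norm (y ^ n / gf_denom w n)) \<le> inverse (fact n) * \<bar>y\<bar> ^ n"
  proof (intro exI allI impI)
    fix n :: nat
    have pos: "0 < gf_denom w n"
      using assms by (rule gf_denom_pos)
    have "norm (norm (y ^ n / gf_denom w n)) = \<bar>y\<bar> ^ n / gf_denom w n"
      using pos by (simp add: power_abs)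
    also have "\<dots> \<le> \<bar>y\<bar> ^ n / fact n"
      using assms pos by (intro divide_left_mono) (auto simp: gf_denom_def one_le_power)
    also have "\<dots> = inverse (fact n) * \<bar>y\<bar> ^ n"
      by (rule divide_inverse_commute)
    finally show "norm (norm (y ^ n / gf_denom w n)) \<le> inverse (fact n) * \<bar>y\<bar> ^ n" .
  qed
qed

lemma summable_set_terms: "0 \<le> w \<Longrightarrow> summable (\<lambda>n. y ^ n / gf_denom w n)"
  by (rule summable_norm_cancel[OF summable_norm_set_terms])

lemma DAG_terms_nonneg: "0 \<le> w \<Longrightarrow> 0 \<le> t \<Longrightarrow> 0 \<le> x \<Longrightarrow> 0 \<le> DAG_terms x w t n"
  unfolding DAG_terms_def weight_def by (auto intro!: sum_nonneg divide_nonneg_nonneg)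

lemma DAG_terms_sums_product:
  assumes w: "0 \<le> w" and x: "0 \<le> x" and s: "summable (DAG_terms x w 1)"
  shows "DAG_terms x w t sums (SetF ((t - 1) * x) w * DAGgf x w 1)"
proof -
  have "norm (DAG_terms x w 1 n) = DAG_terms x w 1 n" for n
    using DAG_terms_nonneg[OF w zero_le_one x] by simp
  then have "summable (\<lambda>n. norm (DAG_terms x w 1 n))"
    using s by simp
  from Cauchy_product_sums[OF summable_norm_set_terms[OF w] this]
  have "(\<lambda>k. \<Sum>i\<le>k. ((t - 1) * x) ^ i / gf_denom w i * DAG_terms x w 1 (k - i)) sums
        ((\<Sum>k. ((t - 1) * x) ^ k / gf_denom w k) * (\<Sum>k. DAG_terms x w 1 k))" .
  moreover have "(\<lambda>k. \<Sum>i\<le>k. ((t - 1) * x) ^ i / gf_denom w i * DAG_terms x w 1 (k - i)) = DAG_terms x w t"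
    by (rule ext) (rule DAG_terms_convolution[OF w, symmetric])
  ultimately show ?thesis
    by (simp only: DAGgf_def SetF_eq)
qed

lemma DAGgf_eq_product:
  assumes "0 \<le> w" "0 \<le> x" "summable (DAG_terms x w 1)"
  shows "DAGgf x w t = SetF ((t - 1) * x) w * DAGgf x w 1"
  unfolding DAGgf_def[of x w t] by (rule sums_unique[symmetric, OF DAG_terms_sums_product[OF assms]])

lemma DAG_terms_at_0: "DAG_terms x w t 0 = 1"
  by (simp add: DAG_terms_def dags_of_size_0 weight_def nverts_def nedges_def nsources_def sources_def
      binomial_eq_0)

lemma DAG_terms_no_sources:
  assumes "0 < n"
  shows "DAG_terms x w 0 n = 0"
proof -
  have "nsources G \<noteq> 0" if "G \<in> dags_of_size n" for G
    using that dag_has_source[of G] assms by (simp add: dags_of_size_def nsources_def)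
  then show ?thesis
    unfolding DAG_terms_def weight_def by (intro sum.neutral) simp
qed

lemma DAGgf_ge_1:
  assumes "0 \<le> w" "0 \<le> t" "0 \<le> x" "summable (DAG_terms x w t)"
  shows "1 \<le> DAGgf x w t"
  using sum_le_suminf[OF assms(4), of "{0}"] DAG_terms_nonneg[OF assms(1-3)]
  by (simp add: DAGgf_def DAG_terms_at_0)

lemma SetF_shift_pos:
  assumes "0 \<le> w" "0 \<le> x" "0 \<le> t" "summable (DAG_terms x w 1)" "summable (DAG_terms x w t)"
  shows "0 < SetF ((t - 1) * x) w"
proof -
  have "0 < SetF ((t - 1) * x) w * DAGgf x w 1"
    using DAGgf_ge_1[OF assms(1,3,2,5)] DAGgf_eq_product[OF assms(1,2,4), of t] by linarith
  moreover have "0 < DAGgf x w 1"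
    using DAGgf_ge_1[OF assms(1) zero_le_one assms(2,4)] by linarith
  ultimately show ?thesis
    by (rule zero_less_mult_pos2)
qed

lemma DAG_terms_1_mult_power_le:
  assumes "0 \<le> x" "0 \<le> w" "0 \<le> u" "u \<le> 1"
  shows "DAG_terms x w 1 n * u ^ n \<le> DAG_terms x w u n"
  unfolding DAG_terms_def sum_distrib_right
proof (rule sum_mono)
  fix G assume "G \<in> dags_of_size n"
  then have "nsources G \<le> n"
    using card_mono[OF _ sources_subset[of G]] by (simp add: dags_of_size_def nsources_def)
  then have "u ^ n \<le> u ^ nsources G"
    using assms by (intro power_decreasing) auto
  moreover have "0 \<le> weight x w 1 G"
    using assms by (simp add: weight_def)
  ultimately show "weight x w 1 G * u ^ n \<le> weight x w u G"
    by (subst weight_eq_weight_1) (rule mult_left_mono)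
qed

definition dag_fps :: "real \<Rightarrow> real \<Rightarrow> real fps" where
  "dag_fps w t = Abs_fps (DAG_terms 1 w t)"

definition set_fps :: "real \<Rightarrow> real \<Rightarrow> real fps" where
  "set_fps w y = Abs_fps (\<lambda>n. y ^ n / gf_denom w n)"

lemma dag_fps_eq_product:
  assumes "0 \<le> w"
  shows "dag_fps w t = set_fps w (t - 1) * dag_fps w 1"
proof (rule fps_ext)
  fix n
  have "fps_nth (dag_fps w t) n = (\<Sum>a\<le>n. (t - 1) ^ a / gf_denom w a * DAG_terms 1 w 1 (n - a))"
    using DAG_terms_convolution[OF assms, of 1 t n] by (simp add: dag_fps_def)
  also have "\<dots> = fps_nth (set_fps w (t - 1) * dag_fps w 1) n"
    by (simp add: fps_mult_nth set_fps_def dag_fps_def atLeast0AtMost)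
  finally show "fps_nth (dag_fps w t) n = fps_nth (set_fps w (t - 1) * dag_fps w 1) n" .
qed

lemma dag_fps_at_0: "dag_fps w 0 = 1"
  by (rule fps_ext) (simp add: dag_fps_def DAG_terms_at_0 DAG_terms_no_sources)

lemma set_fps_scale: "set_fps w (- d) = set_fps w (- 1) oo (fps_const d * fps_X)"
  by (rule fps_ext) (simp add: set_fps_def power_minus[of d])

text \<open>With \<open>A\<^sub>t = dag_fps w t\<close> and \<open>S(y) = set_fps w y\<close>: \<open>A\<^sub>u = S(u - 1) A\<^sub>1\<close>, \<open>S(-1) A\<^sub>1 = A\<^sub>0 = 1\<close>,
  and \<open>S(u - 1)\<close> is \<open>S(-1)\<close> rescaled by \<open>1 - u\<close>.\<close>
lemma dag_fps_rescale:
  assumes "0 \<le> w"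
  shows "dag_fps w u * (dag_fps w 1 oo (fps_const (1 - u) * fps_X)) = dag_fps w 1"
proof -
  let ?L = "fps_const (1 - u) * fps_X"
  have L0: "fps_nth ?L 0 = 0" by simp
  have "dag_fps w u = (set_fps w (- 1) oo ?L) * dag_fps w 1"
    using dag_fps_eq_product[OF assms, of u] set_fps_scale[of w "1 - u"] by simp
  then have "dag_fps w u * (dag_fps w 1 oo ?L) =
      dag_fps w 1 * ((set_fps w (- 1) oo ?L) * (dag_fps w 1 oo ?L))"
    by (simp only: ac_simps)
  also have "\<dots> = dag_fps w 1 * ((set_fps w (- 1) * dag_fps w 1) oo ?L)"
    by (simp only: fps_compose_mult_distrib[OF L0])
  also have "set_fps w (- 1) * dag_fps w 1 = 1"
    using dag_fps_eq_product[OF assms, of 0] dag_fps_at_0 by simp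
  finally show ?thesis by simp
qed

lemma summable_fps_mult_nonneg:
  fixes f g :: "real fps"
  assumes "\<And>n. 0 \<le> fps_nth f n" "\<And>n. 0 \<le> fps_nth g n" "0 \<le> y"
    and "summable (\<lambda>n. fps_nth f n * y ^ n)" "summable (\<lambda>n. fps_nth g n * y ^ n)"
  shows "summable (\<lambda>n. fps_nth (f * g) n * y ^ n)"
proof -
  have "(\<lambda>k. \<Sum>i\<le>k. (fps_nth f i * y ^ i) * (fps_nth g (k - i) * y ^ (k - i))) sums
        ((\<Sum>k. fps_nth f k * y ^ k) * (\<Sum>k. fps_nth g k * y ^ k))"
    using assms by (intro Cauchy_product_sums) auto
  moreover have "(\<Sum>i\<le>k. (fps_nth f i * y ^ i) * (fps_nth g (k - i) * y ^ (k - i))) = fps_nth (f * g) k * y ^ k" for k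
    by (auto simp: fps_mult_nth atLeast0AtMost sum_distrib_right intro!: sum.cong simp flip: power_add)
  ultimately show ?thesis by (simp add: sums_summable)
qed

lemma DAG_terms_eq_dag_fps: "DAG_terms x w t n = fps_nth (dag_fps w t) n * x ^ n"
  by (simp add: dag_fps_def DAG_terms_eq_dag_poly)

lemma dag_fps_nonneg: "0 \<le> w \<Longrightarrow> 0 \<le> t \<Longrightarrow> 0 \<le> fps_nth (dag_fps w t) n"
  using DAG_terms_nonneg[of w t 1] by (simp add: dag_fps_def)

lemma summable_dag_fps_1_descent:
  assumes "0 \<le> w" "0 \<le> y" "0 \<le> u" "u \<le> 1"
    and "summable (\<lambda>n. fps_nth (dag_fps w u) n * y ^ n)"
    and "summable (\<lambda>n. fps_nth (dag_fps w 1) n * ((1 - u) * y) ^ n)"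
  shows "summable (\<lambda>n. fps_nth (dag_fps w 1) n * y ^ n)"
proof -
  have "summable (\<lambda>n. fps_nth (dag_fps w 1 oo (fps_const (1 - u) * fps_X)) n * y ^ n)"
    using assms(6) unfolding fps_nth_compose_linear by (simp add: power_mult_distrib mult_ac)
  then have "summable (\<lambda>n. fps_nth (dag_fps w u * (dag_fps w 1 oo (fps_const (1 - u) * fps_X))) n * y ^ n)"
    using assms(1-5) by (intro summable_fps_mult_nonneg) (simp_all add: dag_fps_nonneg)
  then show ?thesis
    using dag_fps_rescale[OF assms(1), of u] by simp
qed

text \<open>Convergence at \<open>t = u < 1\<close> forces convergence at \<open>t = 1\<close>: \<open>A\<^sub>1(d\<^sup>N x)\<close> converges by
  comparison once \<open>d\<^sup>N \<le> u\<close>, where \<open>d = 1 - u\<close>, and \<open>summable_dag_fps_1_descent\<close> descends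
  from \<open>d\<^sup>N x\<close> to \<open>x\<close>.\<close>
lemma summable_DAG_terms_at_1:
  assumes w: "0 \<le> w" and x: "0 \<le> x" and u: "0 < u" "u < 1" and su: "summable (DAG_terms x w u)"
  shows "summable (DAG_terms x w 1)"
proof -
  define d where "d = 1 - u"
  have d: "0 < d" "d < 1" using u by (auto simp: d_def)
  obtain N where N: "d ^ N < u"
    using real_arch_pow_inv[OF u(1) d(2)] by blast
  define P where "P m \<longleftrightarrow> summable (\<lambda>n. fps_nth (dag_fps w 1) n * (d ^ m * x) ^ n)" for m
  have base: "P N"
    unfolding P_def
  proof (rule summable_comparison_test[OF _ su], intro exI allI impI)
    fix n :: nat
    have "d ^ N * x \<le> x * u"
      using mult_right_mono[OF less_imp_le[OF N] x] by (simp add: ac_simps)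
    then have "fps_nth (dag_fps w 1) n * (d ^ N * x) ^ n \<le> DAG_terms x w 1 n * u ^ n"
      using dag_fps_nonneg[OF w, of 1 n] d x
      by (auto simp: DAG_terms_eq_dag_fps power_mult_distrib[symmetric] mult.assoc
          intro!: mult_left_mono power_mono)
    also have "\<dots> \<le> DAG_terms x w u n"
      using DAG_terms_1_mult_power_le[OF x w] u by simp
    finally show "norm (fps_nth (dag_fps w 1) n * (d ^ N * x) ^ n) \<le> DAG_terms x w u n"
      using dag_fps_nonneg[OF w, of 1 n] d x by simp
  qed
  have step: "P m" if "P (Suc m)" for m
  proof -
    have y: "0 \<le> d ^ m * x" "d ^ m * x \<le> x"
      using d x by (auto simp: mult_left_le_one_le power_le_one)
    have A: "summable (\<lambda>n. fps_nth (dag_fps w u) n * (d ^ m * x) ^ n)"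
    proof (rule summable_comparison_test[OF _ su], intro exI allI impI)
      fix n :: nat
      show "norm (fps_nth (dag_fps w u) n * (d ^ m * x) ^ n) \<le> DAG_terms x w u n"
        using dag_fps_nonneg[OF w, of u n] u y
        by (auto simp: DAG_terms_eq_dag_fps intro!: mult_left_mono power_mono)
    qed
    have B: "summable (\<lambda>n. fps_nth (dag_fps w 1) n * ((1 - u) * (d ^ m * x)) ^ n)"
      using that by (simp add: P_def d_def mult.assoc)
    show ?thesis
      unfolding P_def by (rule summable_dag_fps_1_descent[OF w y(1) _ _ A B]) (use u in auto)
  qed
  have "P (N - k)" for k
  proof (induction k)
    case (Suc k)
    show ?case
    proof (cases "k < N")
      case True
      then have "N - k = Suc (N - Suc k)" by simp
      then show ?thesis using Suc.IH step by metis
    qed (use Suc.IH in simp)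
  qed (simp add: base)
  from this[of N] show ?thesis
    unfolding DAG_terms_eq_dag_fps by (simp add: P_def)
qed

section \<open>The H generating function\<close>

definition DAG_terms_integral :: "real \<Rightarrow> real \<Rightarrow> real \<Rightarrow> nat \<Rightarrow> real" where
  "DAG_terms_integral x w u n =
     (\<Sum>G\<in>dags_of_size n. weight x w 1 G * u ^ Suc (nsources G) / Suc (nsources G))"

lemma finite_Hs_of_size: "finite (Hs_of_size n)"
  by (rule finite_subset[OF _ finite_dags_of_size[of n]])
     (auto simp: Hs_of_size_def dags_of_size_def is_H_def)

lemma sum_Hs_sources_eq_sum_finalize:
  "(\<Sum>(H, j)\<in>Sigma (Hs_of_size (Suc n)) sources. f H j) =
     (\<Sum>(G, j)\<in>dags_of_size n \<times> {1..Suc n}. f (finalize G j) j)"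
proof (rule sum.reindex_bij_witness[where i = "\<lambda>(G, j). (finalize G j, j)"
                                    and j = "\<lambda>(H, j). (unfinalize H j, j)"])
  fix p assume "p \<in> Sigma (Hs_of_size (Suc n)) sources"
  then obtain H j where p: "p = (H, j)" and H: "is_H H" "fst H = Suc n" and j: "j \<in> sources H"
    by (auto simp: Hs_of_size_def)
  show "(\<lambda>(G, j). (finalize G j, j)) ((\<lambda>(H, j). (unfinalize H j, j)) p) = p"
    using finalize_unfinalize[OF H(1) j] by (simp add: p)
  show "(\<lambda>(H, j). (unfinalize H j, j)) p \<in> dags_of_size n \<times> {1..Suc n}"
    using is_dag_unfinalize[OF H(1) j] fst_unfinalize[OF H(1) j] unfinalize_in_range[OF H(1) j] H(2)
    by (simp add: p dags_of_size_def)
  show "(\<lambda>(G, j). f (finalize G j) j) ((\<lambda>(H, j). (unfinalize H j, j)) p) = (\<lambda>(H, j). f H j) p"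
    using finalize_unfinalize[OF H(1) j] by (simp add: p)
next
  fix p assume "p \<in> dags_of_size n \<times> {1..Suc n}"
  then obtain G j where p: "p = (G, j)" and G: "is_dag G" "fst G = n" and j: "j \<in> {1..fst G + 1}"
    by (auto simp: dags_of_size_def)
  show "(\<lambda>(H, j). (unfinalize H j, j)) ((\<lambda>(G, j). (finalize G j, j)) p) = p"
    using unfinalize_finalize[OF j] by (simp add: p)
  show "(\<lambda>(G, j). (finalize G j, j)) p \<in> Sigma (Hs_of_size (Suc n)) sources"
    using is_H_finalize[OF j G(1)] sources_finalize[OF j] G(2) by (simp add: p Hs_of_size_def)
qed

text \<open>Each H-structure is counted once per source, and pairs (H-structure, source) correspond
  to pairs (DAG, label of the new vertex) through \<open>finalize\<close>.\<close>
lemma H_terms_Suc: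
  assumes "0 \<le> w"
  shows "H_terms z w u (Suc n) = z * DAG_terms_integral (z / (1 + w)) w u n"
proof -
  define h where "h H = weight z w u H / nsources H" for H
  have "H_terms z w u (Suc n) = (\<Sum>H\<in>Hs_of_size (Suc n). \<Sum>j\<in>sources H. h H)"
    unfolding H_terms_def
  proof (intro sum.cong refl)
    fix H assume "H \<in> Hs_of_size (Suc n)"
    then have "sources H \<noteq> {}"
      using dag_has_source by (auto simp: Hs_of_size_def is_H_def)
    then show "weight z w u H = (\<Sum>j\<in>sources H. h H)"
      by (simp add: h_def nsources_def)
  qed
  also have "\<dots> = (\<Sum>(H, j)\<in>Sigma (Hs_of_size (Suc n)) sources. h H)"
    by (rule sum.Sigma) (simp_all add: finite_Hs_of_size)
  also have "\<dots> = (\<Sum>(G, j)\<in>dags_of_size n \<times> {1..Suc n}. h (finalize G j))"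
    by (rule sum_Hs_sources_eq_sum_finalize)
  also have "\<dots> = (\<Sum>G\<in>dags_of_size n.
      z * (weight (z / (1 + w)) w 1 G * u ^ Suc (nsources G) / Suc (nsources G)))"
    unfolding sum.cartesian_product[symmetric]
  proof (intro sum.cong refl)
    fix G assume "G \<in> dags_of_size n"
    then have n: "fst G = n"
      by (simp add: dags_of_size_def)
    define C where "C = z * (weight (z / (1 + w)) w 1 G * u ^ Suc (nsources G) / Suc (nsources G))"
    have "real (Suc n) * h (finalize G j) = C" if "j \<in> {1..Suc n}" for j
      using weight_finalize[OF assms, of j G z u] that n
      by (simp add: C_def h_def nsources_finalize weight_eq_weight_1[of _ w u G] del: of_nat_Suc)
    then have "(\<Sum>j\<in>{1..Suc n}. h (finalize G j)) = (\<Sum>j\<in>{1..Suc n}. C / real (Suc n))"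
      by (intro sum.cong refl) (simp add: eq_divide_eq mult.commute del: of_nat_Suc)
    then show "(\<Sum>j\<in>{1..Suc n}. h (finalize G j)) = C"
      by (simp del: of_nat_Suc)
  qed
  finally show ?thesis
    by (simp add: DAG_terms_integral_def sum_distrib_left)
qed

text \<open>Both sides vanish at \<open>u = 0\<close> and have derivative \<open>DAG_terms x w u n\<close> in \<open>u\<close>
  (the right-hand side by \<open>DAG_terms_convolution\<close>).\<close>
lemma DAG_terms_integral_eq:
  assumes "0 \<le> w"
  shows "DAG_terms_integral x w u n =
    (\<Sum>a\<le>n. x ^ a * ((u - 1) ^ Suc a - (- 1) ^ Suc a) / (Suc a * gf_denom w a) * DAG_terms x w 1 (n - a))"
proof -
  define R where "R u = (\<Sum>a\<le>n. x ^ a * ((u - 1) ^ Suc a - (- 1) ^ Suc a) / (Suc a * gf_denom w a) *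
    DAG_terms x w 1 (n - a))" for u
  have "((\<lambda>u. DAG_terms_integral x w u n) has_real_derivative DAG_terms x w t n) (at t)" for t
    unfolding DAG_terms_integral_def DAG_terms_def
    by (auto intro!: derivative_eq_intros sum.cong simp: weight_eq_weight_1[of x w t] simp del: of_nat_Suc power_Suc)
  moreover have "(R has_real_derivative DAG_terms x w t n) (at t)" for t
    unfolding R_def DAG_terms_convolution[OF assms, of x t n]
    using gf_denom_pos[OF assms]
    by (auto intro!: derivative_eq_intros sum.cong simp: power_mult_distrib less_imp_neq[symmetric]
        simp del: of_nat_Suc power_Suc)
  ultimately have "((\<lambda>u. DAG_terms_integral x w u n - R u) has_real_derivative 0) (at t)" for t
    using DERIV_diff by fastforce
  then have "DAG_terms_integral x w u n - R u = DAG_terms_integral x w 0 n - R 0"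
    using DERIV_isconst_all by blast
  then show ?thesis
    by (simp add: R_def DAG_terms_integral_def)
qed

lemma H_terms_0: "H_terms z w u 0 = 0"
proof -
  have "Hs_of_size 0 = {}"
    by (auto simp: Hs_of_size_def is_H_def)
  then show ?thesis by (simp add: H_terms_def)
qed

lemma H_terms_convolution:
  assumes "0 \<le> w"
  shows "H_terms z w u n =
    (\<Sum>i\<le>n. (((u - 1) * z) ^ i - (- z) ^ i) / gf_denom w i * DAG_terms (z / (1 + w)) w 1 (n - i))"
proof (cases n)
  case 0
  then show ?thesis by (simp add: H_terms_0)
next
  case (Suc m)
  have "((u - 1) * z) ^ Suc a - (- z) ^ Suc a = z ^ Suc a * ((u - 1) ^ Suc a - (- 1) ^ Suc a)" for a
    by (simp only: power_mult_distrib power_minus[of z]) (simp add: algebra_simps del: power_Suc)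
  moreover have "z * ((z / (1 + w)) ^ a * c / (Suc a * gf_denom w a)) = z ^ Suc a * c / gf_denom w (Suc a)"
    for a c
    using assms gf_denom_pos[OF assms, of a]
    by (simp add: gf_denom_Suc power_divide field_simps del: of_nat_Suc)
  ultimately have key: "z * ((z / (1 + w)) ^ a * ((u - 1) ^ Suc a - (- 1) ^ Suc a) / (Suc a * gf_denom w a)) =
      (((u - 1) * z) ^ Suc a - (- z) ^ Suc a) / gf_denom w (Suc a)" for a
    by presburger
  have "H_terms z w u (Suc m) = z * (\<Sum>a\<le>m. (z / (1 + w)) ^ a * ((u - 1) ^ Suc a - (- 1) ^ Suc a) /
      (Suc a * gf_denom w a) * DAG_terms (z / (1 + w)) w 1 (m - a))"
    by (simp only: H_terms_Suc[OF assms] DAG_terms_integral_eq[OF assms])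
  also have "\<dots> = (\<Sum>a\<le>m. (((u - 1) * z) ^ Suc a - (- z) ^ Suc a) / gf_denom w (Suc a) *
      DAG_terms (z / (1 + w)) w 1 (m - a))"
    unfolding sum_distrib_left by (simp only: mult.assoc[symmetric] key)
  finally have "H_terms z w u (Suc m) =
      (\<Sum>a\<le>m. (((u - 1) * z) ^ Suc a - (- z) ^ Suc a) / gf_denom w (Suc a) * DAG_terms (z / (1 + w)) w 1 (m - a))" .
  then show ?thesis
    unfolding Suc sum.atMost_Suc_shift by simp
qed

lemma Hgf_eq_product:
  assumes w: "0 \<le> w" and z: "0 \<le> z" and s: "summable (DAG_terms (z / (1 + w)) w 1)"
  shows "Hgf z w u = (SetF ((u - 1) * z) w - SetF (- z) w) * DAGgf (z / (1 + w)) w 1"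
proof -
  let ?c = "\<lambda>i. (((u - 1) * z) ^ i - (- z) ^ i) / gf_denom w i"
  have "summable (\<lambda>i. norm (?c i))"
  proof (rule summable_comparison_test[OF _ summable_add[OF summable_norm_set_terms[OF w, of "(u - 1) * z"]
        summable_norm_set_terms[OF w, of "- z"]]])
    show "\<exists>N. \<forall>i\<ge>N. norm (norm (?c i)) \<le> norm (((u - 1) * z) ^ i / gf_denom w i) + norm ((- z) ^ i / gf_denom w i)"
    proof (intro exI allI impI)
      fix i :: nat
      have "norm (?c i) \<le> norm (((u - 1) * z) ^ i / gf_denom w i) + norm ((- z) ^ i / gf_denom w i)"
        unfolding diff_divide_distrib by (rule norm_triangle_ineq4)
      then show "norm (norm (?c i)) \<le> norm (((u - 1) * z) ^ i / gf_denom w i) + norm ((- z) ^ i / gf_denom w i)"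
        by simp
    qed
  qed
  moreover have "norm (DAG_terms (z / (1 + w)) w 1 n) = DAG_terms (z / (1 + w)) w 1 n" for n
    using DAG_terms_nonneg[OF w zero_le_one] w z by simp
  then have "summable (\<lambda>n. norm (DAG_terms (z / (1 + w)) w 1 n))"
    using s by simp
  moreover have "H_terms z w u = (\<lambda>k. \<Sum>i\<le>k. ?c i * DAG_terms (z / (1 + w)) w 1 (k - i))"
    by (rule ext) (rule H_terms_convolution[OF w])
  ultimately have "(\<Sum>i. ?c i) * DAGgf (z / (1 + w)) w 1 = Hgf z w u"
    unfolding DAGgf_def Hgf_def by (simp only: Cauchy_product)
  moreover have "(\<Sum>i. ?c i) = SetF ((u - 1) * z) w - SetF (- z) w"
    unfolding SetF_eq diff_divide_distrib
    by (rule suminf_diff[symmetric]) (simp_all add: summable_set_terms[OF w])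
  ultimately show ?thesis
    by simp
qed

section \<open>Choosing the parameter\<close>

lemma SetF_has_real_derivative:
  assumes "0 \<le> w"
  shows "((\<lambda>y. SetF y w) has_real_derivative SetF (y / (1 + w)) w) (at y)"
proof -
  define c where "c n = 1 / gf_denom w n" for n
  have SetF: "(\<lambda>y. SetF y w) = (\<lambda>y. \<Sum>n. c n * y ^ n)"
    by (simp add: fun_eq_iff SetF_eq c_def)
  have "summable (\<lambda>n. c n * y ^ n)" for y
    using summable_set_terms[OF assms, of y] by (simp add: c_def)
  then have "((\<lambda>y. \<Sum>n. c n * y ^ n) has_real_derivative (\<Sum>n. diffs c n * y ^ n)) (at y)"
    by (rule termdiffs_strong_converges_everywhere)
  moreover have "diffs c n * y ^ n = (y / (1 + w)) ^ n / gf_denom w n" for n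
    using assms gf_denom_pos[OF assms, of n]
    by (simp add: diffs_def c_def gf_denom_Suc power_divide field_simps del: of_nat_Suc)
  ultimately show ?thesis
    unfolding SetF SetF_eq[of "y / (1 + w)"] by simp
qed

lemma SetF_shift_has_real_derivative:
  assumes "0 \<le> w"
  shows "((\<lambda>t. SetF ((t - 1) * z) w) has_real_derivative z * SetF ((t - 1) * (z / (1 + w))) w) (at t)"
proof -
  have "((\<lambda>t. SetF ((t - 1) * z) w) has_real_derivative SetF ((t - 1) * z / (1 + w)) w * z) (at t)"
    using assms by (intro DERIV_chain2[OF SetF_has_real_derivative]) (auto intro!: derivative_eq_intros)
  then show ?thesis
    by (simp add: mult.commute)
qed

definition t_cdf :: "real \<Rightarrow> real \<Rightarrow> real \<Rightarrow> real \<Rightarrow> real" where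
  "t_cdf z w u t = (SetF ((t - 1) * z) w - SetF (- z) w) / (SetF ((u - 1) * z) w - SetF (- z) w)"

lemma tval_eq_the_inv_into: "tval z w u x = the_inv_into {0..u} (t_cdf z w u) x"
  by (simp add: tval_def the_inv_into_def t_cdf_def)

lemma t_cdf_has_real_derivative:
  assumes "0 \<le> w"
  shows "(t_cdf z w u has_real_derivative
           z * SetF ((t - 1) * (z / (1 + w))) w / (SetF ((u - 1) * z) w - SetF (- z) w)) (at t)"
proof -
  have "((\<lambda>t. SetF ((t - 1) * z) w - SetF (- z) w) has_real_derivative
      z * SetF ((t - 1) * (z / (1 + w))) w - 0) (at t)"
    by (intro DERIV_diff SetF_shift_has_real_derivative[OF assms] DERIV_const)
  from DERIV_cdivide[OF this, of "SetF ((u - 1) * z) w - SetF (- z) w"] show ?thesis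
    by (simp add: t_cdf_def[abs_def])
qed

lemma
  assumes z: "0 < z" and w: "0 \<le> w" and u: "0 < u"
    and pos: "\<And>t. t \<in> {0..u} \<Longrightarrow> 0 < SetF ((t - 1) * (z / (1 + w))) w"
  shows SetF_increment_pos: "0 < SetF ((u - 1) * z) w - SetF (- z) w"
    and t_cdf_strict_mono: "strict_mono_on {0..u} (t_cdf z w u)"
    and t_cdf_0: "t_cdf z w u 0 = 0"
    and t_cdf_u: "t_cdf z w u u = 1"
proof -
  have mono: "SetF ((a - 1) * z) w < SetF ((b - 1) * z) w" if "a \<in> {0..u}" "b \<in> {0..u}" "a < b" for a b
  proof (rule DERIV_pos_imp_increasing[where f = "\<lambda>t. SetF ((t - 1) * z) w", OF \<open>a < b\<close>])
    fix t assume "a \<le> t" "t \<le> b"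
    then have "t \<in> {0..u}" using that by auto
    then show "\<exists>y. ((\<lambda>t. SetF ((t - 1) * z) w) has_real_derivative y) (at t) \<and> 0 < y"
      using SetF_shift_has_real_derivative[OF w, of z t] pos z
      by (intro exI[of _ "z * SetF ((t - 1) * (z / (1 + w))) w"]) simp
  qed
  show F: "0 < SetF ((u - 1) * z) w - SetF (- z) w"
    using mono[of 0 u] u by simp
  show "strict_mono_on {0..u} (t_cdf z w u)"
    using mono F by (intro strict_mono_onI) (simp add: t_cdf_def divide_strict_right_mono)
  show "t_cdf z w u 0 = 0" "t_cdf z w u u = 1"
    using F by (simp_all add: t_cdf_def)
qed

lemma interval_integral_substitution_strict_mono:
  fixes f g g' \<phi> :: "real \<Rightarrow> real"
  assumes "a \<le> b"
    and deriv: "\<And>t. t \<in> {a..b} \<Longrightarrow> (g has_real_derivative g' t) (at t)"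
    and cont_g': "continuous_on {a..b} g'"
    and mono: "strict_mono_on {a..b} g"
    and cont_\<phi>: "continuous_on {a..b} \<phi>"
    and comp: "\<And>t. t \<in> {a..b} \<Longrightarrow> f (g t) = \<phi> t"
  shows "(LBINT x=g a..g b. f x) = (LBINT t=a..b. g' t * \<phi> t)"
proof -
  have cont_g: "continuous_on {a..b} g"
    by (intro continuous_at_imp_continuous_on ballI) (rule DERIV_isCont[OF deriv])
  have inj: "inj_on g {a..b}"
    using mono by (rule strict_mono_on_imp_inj_on)
  have "continuous_on (g ` {a..b}) (the_inv_into {a..b} g)"
    by (rule continuous_on_inv[OF cont_g compact_Icc]) (simp add: the_inv_into_f_f[OF inj])
  then have cont: "continuous_on (g ` {a..b}) (\<phi> \<circ> the_inv_into {a..b} g)"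
    by (rule continuous_on_compose) (simp add: image_image the_inv_into_f_f[OF inj] cont_\<phi>)
  have "(\<phi> \<circ> the_inv_into {a..b} g) y = f y" if "y \<in> g ` {a..b}" for y
    using that comp by (auto simp: the_inv_into_f_f[OF inj])
  then have cont_f: "continuous_on (g ` {a..b}) f"
    using iffD1[OF continuous_on_cong[OF refl] cont] by blast
  have "(LBINT t=a..b. g' t *\<^sub>R f (g t)) = (LBINT y=g a..g b. f y)"
    by (rule interval_integral_substitution_finite[OF assms(1) _ cont_f cont_g'])
      (simp add: has_field_derivative_at_within deriv)
  moreover have "(LBINT t=a..b. g' t *\<^sub>R f (g t)) = (LBINT t=a..b. g' t * \<phi> t)"
    using assms(1) comp by (intro interval_integral_cong) (auto simp: einterval_iff)
  ultimately show ?thesis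
    by simp
qed

lemma interval_integral_power:
  fixes a b :: real
  shows "(LBINT t=a..b. t ^ k) = (b ^ Suc k - a ^ Suc k) / Suc k"
proof -
  have "((\<lambda>t. t ^ Suc k / Suc k) has_real_derivative t ^ k) (at t)" for t :: real
    by (auto intro!: derivative_eq_intros simp del: of_nat_Suc power_Suc)
  then have "(LBINT t=a..b. t ^ k) = b ^ Suc k / Suc k - a ^ Suc k / Suc k"
    by (intro interval_integral_FTC_finite continuous_intros)
      (auto simp: has_real_derivative_iff_has_vector_derivative[symmetric] intro: has_field_derivative_at_within)
  then show ?thesis
    by (simp add: diff_divide_distrib)
qed

text \<open>The parameter \<open>t\<close> has density \<open>z SetF ((t - 1) z / (1 + w)) w / (SetF ((u - 1) z) w - SetF (- z) w)\<close>
  on \<open>[0, u]\<close>; its numerator cancels the denominator of the conditional probability.\<close>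
lemma GammaH_prob_eq:
  assumes z: "0 < z" and w: "0 \<le> w" and u: "0 < u"
    and S: "\<And>t. t \<in> {0..u} \<Longrightarrow> 0 < SetF ((t - 1) * (z / (1 + w))) w"
    and pmf: "\<And>t. t \<in> {0..u} \<Longrightarrow>
      pmf (GammaH_given_t D t) H = c * t ^ k / SetF ((t - 1) * (z / (1 + w))) w"
  shows "GammaH_prob D z w u H = z * c * u ^ Suc k / (Suc k * (SetF ((u - 1) * z) w - SetF (- z) w))"
proof -
  define x where "x = z / (1 + w)"
  define F where "F = SetF ((u - 1) * z) w - SetF (- z) w"
  let ?S = "\<lambda>t. SetF ((t - 1) * x) w"
  note cdf = SetF_increment_pos[OF z w u S] t_cdf_strict_mono[OF z w u S]
    t_cdf_0[OF z w u S] t_cdf_u[OF z w u S]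
  have F: "0 < F"
    using cdf(1) by (simp add: F_def)
  have cont_S: "continuous_on {0..u} ?S"
    using DERIV_isCont[OF SetF_shift_has_real_derivative[OF w, of x]]
    by (intro continuous_at_imp_continuous_on ballI) (simp add: x_def)
  have "GammaH_prob D z w u H = (LBINT y=ereal 0..ereal 1. pmf (GammaH_given_t D (tval z w u y)) H)"
    unfolding GammaH_prob_def by (rule interval_integral_Ico[symmetric]) simp
  also have "\<dots> = (LBINT y=t_cdf z w u 0..t_cdf z w u u. pmf (GammaH_given_t D (tval z w u y)) H)"
    by (simp only: cdf(3,4))
  also have "\<dots> = (LBINT t=ereal 0..u. z * ?S t / F * (c * t ^ k / ?S t))"
  proof (rule interval_integral_substitution_strict_mono)
    show "(t_cdf z w u has_real_derivative z * ?S t / F) (at t)" for t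
      using t_cdf_has_real_derivative[OF w] by (simp add: F_def x_def)
    show "continuous_on {0..u} (\<lambda>t. z * ?S t / F)"
      using cont_S F by (intro continuous_intros) auto
    show "continuous_on {0..u} (\<lambda>t. c * t ^ k / ?S t)"
      using cont_S S by (intro continuous_intros) (auto simp: x_def less_imp_neq[symmetric])
    show "pmf (GammaH_given_t D (tval z w u (t_cdf z w u t))) H = c * t ^ k / ?S t" if "t \<in> {0..u}" for t
      using that pmf the_inv_into_f_f[OF strict_mono_on_imp_inj_on[OF cdf(2)]]
      by (simp add: tval_eq_the_inv_into x_def)
  qed (use u cdf(2) in auto)
  also have "\<dots> = (LBINT t=ereal 0..u. z * c / F * t ^ k)"
  proof (rule interval_integral_cong)
    fix t assume "t \<in> einterval (min (ereal 0) (ereal u)) (max (ereal 0) (ereal u))"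
    then have "0 < ?S t"
      using S u by (auto simp: einterval_iff x_def)
    then show "z * ?S t / F * (c * t ^ k / ?S t) = z * c / F * t ^ k"
      by simp
  qed
  also have "\<dots> = z * c * u ^ Suc k / (Suc k * F)"
    unfolding interval_lebesgue_integral_mult_right interval_integral_power by simp
  finally show ?thesis
    by (simp add: F_def)
qed

theorem lemma7:
  fixes z w u :: real and D :: "real \<Rightarrow> ldg pmf" and H :: ldg
  assumes "z > 0" "w > 0" "u > 0"
    and "summable (H_terms z w u)"
    and "\<And>t. t \<in> {0..u} \<Longrightarrow> summable (DAG_terms (z / (1 + w)) w t)"
    and "\<And>t G. t \<in> {0..u} \<Longrightarrow> is_dag G \<Longrightarrow>
           pmf (D t) G = weight (z / (1 + w)) w t G / DAGgf (z / (1 + w)) w t"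
    and "is_H H"
  shows "GammaH_prob D z w u H =
           z ^ nverts H * w ^ nedges H * u ^ nsources H /
           (fact (nverts H) * (1 + w) ^ (nverts H choose 2) * Hgf z w u)"
proof -
  define x where "x = z / (1 + w)"
  define K where "K = DAGgf x w 1"
  define F where "F = SetF ((u - 1) * z) w - SetF (- z) w"
  have w: "0 \<le> w" and x: "0 \<le> x"
    using assms(1,2) by (auto simp: x_def)
  have s: "summable (DAG_terms x w t)" if "t \<in> {0..u}" for t
    using assms(5)[OF that] by (simp add: x_def)
  have s1: "summable (DAG_terms x w 1)"
    using s[of 1] summable_DAG_terms_at_1[OF w x assms(3) _ s[of u]] assms(3) by (cases "1 \<le> u") auto
  have S: "0 < SetF ((t - 1) * x) w" if "t \<in> {0..u}" for t
    using SetF_shift_pos[OF w x _ s1 s[OF that]] that by simp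
  have "0 < nsources H"
    using assms(7) dag_has_source[of H] by (simp add: is_H_def nsources_def card_gt_0_iff)
  then obtain k where k: "nsources H = Suc k"
    using gr0_implies_Suc by blast
  have "pmf (GammaH_given_t D t) H = Suc k * weight z w 1 H / (z * K) * t ^ k / SetF ((t - 1) * x) w"
    if "t \<in> {0..u}" for t
    using pmf_GammaH_given_t[where D = D and t = t and z = z and Z = "DAGgf (z / (1 + w)) w t",
        OF assms(7) w _ assms(6)[OF that]] DAGgf_eq_product[OF w x s1, of t] assms(1)
    by (simp add: k K_def x_def)
  from GammaH_prob_eq[OF assms(1) w assms(3) S[unfolded x_def] this[unfolded x_def], folded F_def]
  have "GammaH_prob D z w u H = weight z w u H / (F * K)"
    using assms(1) by (simp add: weight_eq_weight_1[of z w u] k field_simps del: of_nat_Suc power_Suc)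
  also have "F * K = Hgf z w u"
    using Hgf_eq_product[OF w _ s1[unfolded x_def]] assms(1) by (simp add: F_def K_def x_def)
  finally show ?thesis
    by (simp add: weight_def mult_ac)
qed

end
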